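(* Let $0<\gamma\le\frac{1-\beta}{(1+\beta)^2\Phi_{\max}^2}$, run TD(0) $\theta_t=\theta_{t-1}+\gamma f_t(\theta_{t-1})$ and set $z_i=\theta_i-\theta^\star$. Then for all integers $k\ge0$, $N\ge1$, $$\sum_{i=k+1}^{k+N-1}\sum_{j=i+1}^{k+N}\mathbb E\big[z_i^\top z_j\big]\le\frac{2}{\gamma(1-\beta)\mu'}\sum_{i=k+1}^{k+N}\mathbb E\big[\|z_i\|_2^2\big].$$
   Context: Setting. Let $\mathcal S=\{1,\dots,n\}$ be a finite state space and $\mathcal A$ a finite action space; fix a stationary randomized policy $\pi$, transition probabilities $P(s'|s,a)$, a reward function $r$ with $|r(s,a)|\le R_{\max}$, and a discount factor $\beta\in(0,1)$. Let $P^\pi(s,s')=\sum_a\pi(s,a)P(s'|s,a)$, assumed irreducible with stationary distribution $\rho$, $D=\mathrm{diag}(\rho)$. Features $\phi:\mathcal S\to\mathbb R^d$ with $\|\phi(s)\|_2\le\Phi_{\max}$, $\Phi\in\mathbb R^{n\times d}$ with rows $\phi(s)^\top$ of full column rank, $R(s)=\sum_a\pi(s,a)r(s,a)$, $A=\Phi^\top D(I-\beta P^\pi)\Phi$, $b=\Phi^\top DR$, $\theta^\star=A^{-1}b$, $B=\sum_s\rho(s)\phi(s)\phi(s)^\top$ with minimum eigenvalue $\mu'>0$. Samples $(s_t,a_t,r_t,s'_t)_{t\ge1}$ i.i.d. with $s_t\sim\rho$, $a_t\sim\pi(s_t,\cdot)$, $r_t=r(s_t,a_t)$, $s'_t\sim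 P(\cdot|s_t,a_t)$, independent of $\theta_0$; $f_t(\theta)=(r_t+\beta\theta^\top\phi(s'_t)-\theta^\top\phi(s_t))\phi(s_t)$. *)

theory Defs
  imports "HOL-Analysis.Analysis" "HOL-Probability.Probability"
begin

text \<open>Policy-induced transition matrix P^pi(s,s') = sum_a pi(s,a) P(s'|s,a).
  Transition probabilities P(s'|s,a) are written  P s a s'.\<close>
definition Ppi :: "('s::finite \<Rightarrow> 'act::finite \<Rightarrow> real) \<Rightarrow> ('s \<Rightarrow> 'act \<Rightarrow> 's \<Rightarrow> real) \<Rightarrow> real^'s^'s" where
  "Ppi pol P = (\<chi> s s'. \<Sum>a\<in>UNIV. pol s a * P s a s')"

definition irreducible_chain :: "real^'s^'s \<Rightarrow> bool" where
  "irreducible_chain Q \<longleftrightarrow> (\<forall>s s'. (s, s') \<in> {(x, y). Q $ x $ y > 0}\<^sup>+)"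

definition stationary_dist :: "real^'s^'s \<Rightarrow> ('s::finite \<Rightarrow> real) \<Rightarrow> bool" where
  "stationary_dist Q rho \<longleftrightarrow> (\<forall>s. rho s \<ge> 0) \<and> (\<Sum>s\<in>UNIV. rho s) = 1 \<and>
     (\<forall>s'. (\<Sum>s\<in>UNIV. rho s * Q $ s $ s') = rho s')"

definition diagm :: "('s::finite \<Rightarrow> real) \<Rightarrow> real^'s^'s" where
  "diagm rho = (\<chi> i j. if i = j then rho i else 0)"

definition feat_matrix :: "('s \<Rightarrow> real^'d) \<Rightarrow> real^'d^'s" where
  "feat_matrix phi = (\<chi> s. phi s)"

definition TD_A :: "('s::finite \<Rightarrow> 'act::finite \<Rightarrow> real) \<Rightarrow> ('s \<Rightarrow> 'act \<Rightarrow> 's \<Rightarrow> real)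
    \<Rightarrow> real \<Rightarrow> ('s \<Rightarrow> real) \<Rightarrow> ('s \<Rightarrow> real^'d::finite) \<Rightarrow> real^'d^'d" where
  "TD_A pol P beta rho phi = transpose (feat_matrix phi) ** diagm rho **
      (mat 1 - beta *\<^sub>R Ppi pol P) ** feat_matrix phi"

definition TD_b :: "('s::finite \<Rightarrow> 'act::finite \<Rightarrow> real) \<Rightarrow> ('s \<Rightarrow> 'act \<Rightarrow> real)
    \<Rightarrow> ('s \<Rightarrow> real) \<Rightarrow> ('s \<Rightarrow> real^'d::finite) \<Rightarrow> real^'d" where
  "TD_b pol r rho phi = transpose (feat_matrix phi) *v (diagm rho *v (\<chi> s. \<Sum>a\<in>UNIV. pol s a * r s a))"

definition theta_star :: "('s::finite \<Rightarrow> 'act::finite \<Rightarrow> real) \<Rightarrow> ('s \<Rightarrow> 'act \<Rightarrow> 's \<Rightarrow> real)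
    \<Rightarrow> ('s \<Rightarrow> 'act \<Rightarrow> real) \<Rightarrow> real \<Rightarrow> ('s \<Rightarrow> real) \<Rightarrow> ('s \<Rightarrow> real^'d::finite) \<Rightarrow> real^'d" where
  "theta_star pol P r beta rho phi = matrix_inv (TD_A pol P beta rho phi) *v TD_b pol r rho phi"

definition Bmat :: "('s::finite \<Rightarrow> real) \<Rightarrow> ('s \<Rightarrow> real^'d::finite) \<Rightarrow> real^'d^'d" where
  "Bmat rho phi = (\<Sum>s\<in>UNIV. rho s *\<^sub>R (\<chi> i j. phi s $ i * phi s $ j))"

definition min_eigenvalue :: "real^'d::finite^'d \<Rightarrow> real" where
  "min_eigenvalue M = Min {mu. \<exists>v. v \<noteq> 0 \<and> M *v v = mu *\<^sub>R v}"

primrec td_iter :: "('s \<Rightarrow> 'act \<Rightarrow> real) \<Rightarrow> real \<Rightarrow> ('s \<Rightarrow> real^'d::finite) \<Rightarrow> real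
    \<Rightarrow> (nat \<Rightarrow> 'w \<Rightarrow> 's \<times> 'act \<times> 's) \<Rightarrow> ('w \<Rightarrow> real^'d) \<Rightarrow> nat \<Rightarrow> 'w \<Rightarrow> real^'d" where
  "td_iter r beta phi gamma X th0 0 \<omega> = th0 \<omega>"
| "td_iter r beta phi gamma X th0 (Suc t) \<omega> =
     (let \<theta> = td_iter r beta phi gamma X th0 t \<omega>;
          (s, a, s') = X (Suc t) \<omega>
      in \<theta> + gamma *\<^sub>R ((r s a + beta * (\<theta> \<bullet> phi s') - \<theta> \<bullet> phi s) *\<^sub>R phi s))"

end

theory Submission
  imports Defs
begin

text \<open>
  Write z_i = theta_i - theta* and A = Phi^T D (I - beta P^pi) Phi. Since theta* solves
  A theta* = b, the expected TD update at theta equals -A (theta - theta*), and since theta_i depends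
  only on theta_0 and the first i samples, independence of the later samples gives
  E[z_i . z_j] = E[z_i . (I - gamma A)^(j-i) z_i].
  Because P^pi does not expand the norm weighted by its stationary distribution,
  v . A v \<ge> (1 - beta) |Phi v|_D^2 and |A v|^2 \<le> Phimax^2 (1 + beta)^2 |Phi v|_D^2, while
  |Phi v|_D^2 \<ge> mu' |v|^2. For the admissible step sizes I - gamma A is therefore a contraction
  with factor kappa = sqrt (1 - gamma (1 - beta) mu'), and the geometric series in j is bounded
  by 1 / (1 - kappa) \<le> 2 / (gamma (1 - beta) mu').
\<close>

section \<open>Symmetric matrices and the minimal eigenvalue\<close>

definition symmetric_matrix :: "real^'n^'n \<Rightarrow> bool" where
  "symmetric_matrix B \<longleftrightarrow> transpose B = B"

lemma symmetric_matrix_inner: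
  assumes "symmetric_matrix B"
  shows "(B *v x) \<bullet> y = x \<bullet> (B *v y)"
  using assms unfolding symmetric_matrix_def
  by (simp add: dot_lmul_matrix flip: vector_transpose_matrix)

lemma finite_eigenvalues_symmetric:
  assumes "symmetric_matrix (B :: real^'n^'n)"
  shows "finite {mu. \<exists>v. v \<noteq> 0 \<and> B *v v = mu *\<^sub>R v}" (is "finite ?S")
proof (rule ccontr)
  assume "infinite ?S"
  then obtain T where T: "T \<subseteq> ?S" "finite T" "card T = Suc CARD('n)"
    using infinite_arbitrarily_large by blast
  define f where "f mu = (SOME v. v \<noteq> 0 \<and> B *v v = mu *\<^sub>R v)" for mu
  have f: "f mu \<noteq> 0 \<and> B *v f mu = mu *\<^sub>R f mu" if "mu \<in> T" for mu
  proof -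
    have "\<exists>v. v \<noteq> 0 \<and> B *v v = mu *\<^sub>R v" using that T(1) by auto
    then show ?thesis unfolding f_def by (rule someI_ex)
  qed
  have "inj_on f T"
  proof (rule inj_onI)
    fix m1 m2 assume "m1 \<in> T" "m2 \<in> T" "f m1 = f m2"
    then have "m1 *\<^sub>R f m1 = m2 *\<^sub>R f m1" "f m1 \<noteq> 0" using f by metis+
    then show "m1 = m2" by (simp add: scaleR_cancel_right)
  qed
  have "pairwise orthogonal (f ` T)"
  proof (rule pairwiseI, clarsimp)
    fix m1 m2 assume m: "m1 \<in> T" "m2 \<in> T" "f m1 \<noteq> f m2"
    then have "m1 * (f m1 \<bullet> f m2) = m2 * (f m1 \<bullet> f m2)"
      using symmetric_matrix_inner[OF assms, of "f m1" "f m2"] f by simp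
    moreover have "m1 \<noteq> m2" using m by auto
    ultimately show "orthogonal (f m1) (f m2)" by (simp add: orthogonal_def)
  qed
  moreover have "0 \<notin> f ` T" using f by auto
  ultimately have "card (f ` T) \<le> CARD('n)"
    using pairwise_orthogonal_independent independent_card_le
    by (metis DIM_cart DIM_real mult_1_right)
  with \<open>inj_on f T\<close> T(3) show False by (simp add: card_image)
qed

text \<open>The form q y = y . B y - m |y|^2 is nonnegative and vanishes at x; expanding it along the
  gradient direction B x - m x shows that this direction is 0.\<close>
lemma quadratic_form_min_eigenvector:
  assumes sym: "symmetric_matrix B"
    and min: "\<And>y. m * (norm y)\<^sup>2 \<le> y \<bullet> (B *v y)"
    and attained: "x \<bullet> (B *v x) = m * (norm x)\<^sup>2"
  shows "B *v x = m *\<^sub>R x"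
proof -
  define q where "q y = y \<bullet> (B *v y) - m * (norm y)\<^sup>2" for y
  define w where "w = B *v x - m *\<^sub>R x"
  have q_nonneg: "q y \<ge> 0" for y using min[of y] by (simp add: q_def)
  have "q x = 0" using attained by (simp add: q_def)
  have q_line: "q (x - t *\<^sub>R w) = - 2 * t * (w \<bullet> w) + t\<^sup>2 * q w" for t
  proof -
    have "(B *v x) \<bullet> w = x \<bullet> (B *v w)" by (rule symmetric_matrix_inner[OF sym])
    then show ?thesis
      using \<open>q x = 0\<close> unfolding q_def w_def power2_norm_eq_inner
      by (simp add: matrix_vector_mult_diff_distrib matrix_vector_mult_scaleR inner_diff_left
          inner_diff_right power2_eq_square algebra_simps inner_commute)
  qed
  have "w \<bullet> w = 0"
  proof (cases "q w = 0")
    case True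
    then have "w \<bullet> w \<le> 0" using q_nonneg[of "x - 1 *\<^sub>R w"] q_line[of 1] by simp
    then show ?thesis using inner_ge_zero[of w] by linarith
  next
    case False
    then have qw: "q w > 0" using q_nonneg[of w] by simp
    have "0 \<le> q (x - ((w \<bullet> w) / q w) *\<^sub>R w)" by (rule q_nonneg)
    also have "\<dots> = - ((w \<bullet> w)\<^sup>2 / q w)"
      unfolding q_line using qw by (simp add: power2_eq_square field_simps)
    finally have "(w \<bullet> w)\<^sup>2 \<le> 0" using qw by (simp add: divide_le_0_iff)
    then show ?thesis by (metis power2_less_eq_zero_iff)
  qed
  then show ?thesis by (simp add: w_def)
qed

lemma min_eigenvalue_le_Rayleigh:
  fixes B :: "real^'n^'n"
  assumes sym: "symmetric_matrix B"
  shows "min_eigenvalue B * (norm v)\<^sup>2 \<le> v \<bullet> (B *v v)"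
proof -
  define h where "h x = x \<bullet> (B *v x)" for x :: "real^'n"
  have "continuous_on (sphere 0 1) h" unfolding h_def
    by (intro continuous_intros linear_continuous_on matrix_vector_mul_linear)
  moreover have "sphere (0 :: real^'n) 1 \<noteq> {}" by simp
  ultimately obtain x0 where x0: "x0 \<in> sphere 0 1" "\<And>y. y \<in> sphere 0 1 \<Longrightarrow> h x0 \<le> h y"
    using continuous_attains_inf[OF compact_sphere] by blast
  have h_scale: "h (c *\<^sub>R x) = c\<^sup>2 * h x" for c x
    by (simp add: h_def matrix_vector_mult_scaleR power2_eq_square)
  have min: "h x0 * (norm y)\<^sup>2 \<le> h y" for y
  proof (cases "y = 0")
    case False
    then have "h x0 \<le> h ((1 / norm y) *\<^sub>R y)" using x0(2) by simp
    then show ?thesis using False by (simp add: h_scale power_divide field_simps)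
  qed (simp add: h_def)
  have "B *v x0 = h x0 *\<^sub>R x0"
    using x0(1) by (intro quadratic_form_min_eigenvector[OF sym]) (auto simp: h_def min[unfolded h_def])
  then have "min_eigenvalue B \<le> h x0"
    unfolding min_eigenvalue_def using finite_eigenvalues_symmetric[OF sym] x0(1)
    by (intro Min_le) (auto intro!: exI[of _ x0])
  then have "min_eigenvalue B * (norm v)\<^sup>2 \<le> h x0 * (norm v)\<^sup>2" by (simp add: mult_right_mono)
  also have "\<dots> \<le> v \<bullet> (B *v v)" using min[of v] by (simp add: h_def)
  finally show ?thesis .
qed

section \<open>Norms weighted by a stationary distribution\<close>

lemma weighted_Cauchy_Schwarz_sum:
  fixes w a b :: "'s \<Rightarrow> real"
  assumes "\<And>s. w s \<ge> 0"
  shows "(\<Sum>s\<in>S. w s * a s * b s)\<^sup>2 \<le> (\<Sum>s\<in>S. w s * (a s)\<^sup>2) * (\<Sum>s\<in>S. w s * (b s)\<^sup>2)"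
proof -
  have "(\<Sum>s\<in>S. (sqrt (w s) * a s) * (sqrt (w s) * b s))\<^sup>2
     \<le> (\<Sum>s\<in>S. (sqrt (w s) * a s)\<^sup>2) * (\<Sum>s\<in>S. (sqrt (w s) * b s)\<^sup>2)"
    by (rule Cauchy_Schwarz_ineq_sum)
  then show ?thesis
    using assms by (simp add: power_mult_distrib mult_ac)
qed

definition weighted_inner :: "('s::finite \<Rightarrow> real) \<Rightarrow> real^'s \<Rightarrow> real^'s \<Rightarrow> real" where
  "weighted_inner rho u w = (\<Sum>s\<in>UNIV. rho s * u $ s * w $ s)"

definition weighted_norm2 :: "('s::finite \<Rightarrow> real) \<Rightarrow> real^'s \<Rightarrow> real" where
  "weighted_norm2 rho u = (\<Sum>s\<in>UNIV. rho s * (u $ s)\<^sup>2)"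

lemma weighted_norm2_nonneg: "(\<And>s. rho s \<ge> 0) \<Longrightarrow> weighted_norm2 rho u \<ge> 0"
  unfolding weighted_norm2_def by (intro sum_nonneg mult_nonneg_nonneg) auto

lemma weighted_inner_Cauchy_Schwarz:
  "(\<And>s. rho s \<ge> 0) \<Longrightarrow> (weighted_inner rho u w)\<^sup>2 \<le> weighted_norm2 rho u * weighted_norm2 rho w"
  unfolding weighted_inner_def weighted_norm2_def by (rule weighted_Cauchy_Schwarz_sum)

lemma weighted_norm2_diff:
  "weighted_norm2 rho (u - c *\<^sub>R w)
     = weighted_norm2 rho u - 2 * c * weighted_inner rho w u + c\<^sup>2 * weighted_norm2 rho w"
  unfolding weighted_norm2_def weighted_inner_def
  by (simp add: power2_eq_square algebra_simps sum_subtractf sum.distrib sum_distrib_left)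

lemma weighted_inner_self: "weighted_inner rho u u = weighted_norm2 rho u"
  by (simp add: weighted_inner_def weighted_norm2_def power2_eq_square mult.assoc)

lemma weighted_inner_diff_left:
  "weighted_inner rho (u - c *\<^sub>R w) x = weighted_inner rho u x - c * weighted_inner rho w x"
  by (simp add: weighted_inner_def algebra_simps sum_subtractf sum_distrib_left)

definition stochastic_matrix :: "real^'n^'n \<Rightarrow> bool" where
  "stochastic_matrix Q \<longleftrightarrow> (\<forall>i j. Q $ i $ j \<ge> 0) \<and> (\<forall>i. (\<Sum>j\<in>UNIV. Q $ i $ j) = 1)"

text \<open>Jensen's inequality in every row, then stationarity.\<close>
lemma stationary_weighted_norm2_le:
  assumes Q: "stochastic_matrix Q" and rho: "stationary_dist Q rho"
  shows "weighted_norm2 rho (Q *v u) \<le> weighted_norm2 rho u"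
proof -
  have rho_nonneg: "rho s \<ge> 0" for s using rho by (simp add: stationary_dist_def)
  have row_Jensen: "((Q *v u) $ i)\<^sup>2 \<le> (\<Sum>j\<in>UNIV. Q $ i $ j * (u $ j)\<^sup>2)" for i
  proof -
    have "(\<Sum>j\<in>UNIV. Q $ i $ j * 1 * u $ j)\<^sup>2 \<le> (\<Sum>j\<in>UNIV. Q $ i $ j * 1\<^sup>2) * (\<Sum>j\<in>UNIV. Q $ i $ j * (u $ j)\<^sup>2)"
      using Q by (intro weighted_Cauchy_Schwarz_sum) (simp add: stochastic_matrix_def)
    then show ?thesis using Q by (simp add: stochastic_matrix_def matrix_vector_mult_def)
  qed
  have "weighted_norm2 rho (Q *v u) \<le> (\<Sum>i\<in>UNIV. rho i * (\<Sum>j\<in>UNIV. Q $ i $ j * (u $ j)\<^sup>2))"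
    unfolding weighted_norm2_def using row_Jensen rho_nonneg by (intro sum_mono mult_left_mono) auto
  also have "\<dots> = (\<Sum>j\<in>UNIV. (\<Sum>i\<in>UNIV. rho i * Q $ i $ j) * (u $ j)\<^sup>2)"
    by (simp add: sum_distrib_left sum_distrib_right mult_ac) (rule sum.swap)
  also have "\<dots> = weighted_norm2 rho u"
    using rho by (simp add: stationary_dist_def weighted_norm2_def)
  finally show ?thesis .
qed

lemma Ppi_stochastic:
  assumes "\<forall>s a. pol s a \<ge> 0" "\<forall>s. (\<Sum>a\<in>UNIV. pol s a) = 1"
    and "\<forall>s a s'. P s a s' \<ge> 0" "\<forall>s a. (\<Sum>s'\<in>UNIV. P s a s') = 1"
  shows "stochastic_matrix (Ppi pol P)"
proof -
  have "(\<Sum>s'\<in>UNIV. \<Sum>a\<in>UNIV. pol s a * P s a s') = 1" for s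
    using assms by (subst sum.swap) (simp add: sum_distrib_left[symmetric])
  then show ?thesis
    using assms by (simp add: stochastic_matrix_def Ppi_def sum_nonneg)
qed

section \<open>The TD(0) matrices and the expected update\<close>

lemma feat_matrix_mult: "feat_matrix phi *v v = (\<chi> s. phi s \<bullet> v)"
  by (simp add: vec_eq_iff matrix_vector_mult_def feat_matrix_def inner_vec_def)

lemma transpose_feat_matrix_diagm_mult:
  "transpose (feat_matrix phi) *v (diagm rho *v w) = (\<Sum>s\<in>UNIV. (rho s * w $ s) *\<^sub>R phi s)"
proof -
  have "(\<Sum>j\<in>UNIV. (if i = j then rho i else 0) * w $ j) = (\<Sum>j\<in>UNIV. if i = j then rho i * w $ i else 0)"
    for i by (rule sum.cong) auto
  then have "diagm rho *v w = (\<chi> s. rho s * w $ s)"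
    by (simp add: vec_eq_iff matrix_vector_mult_def diagm_def)
  then show ?thesis
    by (simp add: vec_eq_iff matrix_vector_mult_def feat_matrix_def transpose_def sum_component mult.commute)
qed

lemma inner_transpose_feat_matrix_diagm:
  "(transpose (feat_matrix phi) *v (diagm rho *v w)) \<bullet> v = weighted_inner rho w (feat_matrix phi *v v)"
  unfolding transpose_feat_matrix_diagm_mult
  by (simp add: inner_sum_left feat_matrix_mult weighted_inner_def)

lemma TD_A_mult:
  "TD_A pol P beta rho phi *v v = transpose (feat_matrix phi) *v (diagm rho *v
     (feat_matrix phi *v v - beta *\<^sub>R (Ppi pol P *v (feat_matrix phi *v v))))"
  by (simp add: TD_A_def matrix_vector_mul_assoc[symmetric] matrix_vector_mult_diff_rdistrib
      scaleR_matrix_vector_assoc)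

lemma symmetric_Bmat: "symmetric_matrix (Bmat rho phi)"
  by (simp add: symmetric_matrix_def Bmat_def transpose_def vec_eq_iff sum_component mult.commute)

lemma Bmat_quadratic_form: "v \<bullet> (Bmat rho phi *v v) = weighted_norm2 rho (feat_matrix phi *v v)"
proof -
  have "(Bmat rho phi *v v) $ i = (\<Sum>s\<in>UNIV. rho s * (phi s \<bullet> v) * phi s $ i)" for i
  proof -
    have "(Bmat rho phi *v v) $ i = (\<Sum>j\<in>UNIV. \<Sum>s\<in>UNIV. rho s * phi s $ i * phi s $ j * v $ j)"
      by (simp add: matrix_vector_mult_def Bmat_def sum_component sum_distrib_left sum_distrib_right mult_ac)
    also have "\<dots> = (\<Sum>s\<in>UNIV. \<Sum>j\<in>UNIV. rho s * phi s $ i * phi s $ j * v $ j)" by (rule sum.swap)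
    finally show ?thesis by (simp add: inner_vec_def sum_distrib_left mult_ac)
  qed
  then show ?thesis
    by (simp add: inner_vec_def sum_distrib_left weighted_norm2_def feat_matrix_mult power2_eq_square mult_ac)
       (rule sum.swap)
qed

definition td_update :: "('s \<Rightarrow> 'act \<Rightarrow> real) \<Rightarrow> real \<Rightarrow> ('s \<Rightarrow> real^'d::finite)
    \<Rightarrow> 's \<times> 'act \<times> 's \<Rightarrow> real^'d \<Rightarrow> real^'d" where
  "td_update r beta phi x \<theta> =
     (case x of (s, a, s') \<Rightarrow> (r s a + beta * (\<theta> \<bullet> phi s') - \<theta> \<bullet> phi s) *\<^sub>R phi s)"

definition sample_weight :: "('s \<Rightarrow> 'act \<Rightarrow> real) \<Rightarrow> ('s \<Rightarrow> 'act \<Rightarrow> 's \<Rightarrow> real) \<Rightarrow> ('s \<Rightarrow> real)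
    \<Rightarrow> 's \<times> 'act \<times> 's \<Rightarrow> real" where
  "sample_weight pol P rho x = (case x of (s, a, s') \<Rightarrow> rho s * pol s a * P s a s')"

lemma sum_UNIV_triple:
  "(\<Sum>x\<in>(UNIV :: ('a::finite \<times> 'b::finite \<times> 'c::finite) set). g x)
     = (\<Sum>s\<in>UNIV. \<Sum>a\<in>UNIV. \<Sum>s'\<in>UNIV. g (s, a, s'))"
  unfolding sum.cartesian_product by (simp add: split_beta)

locale td_model =
  fixes pol :: "'s::finite \<Rightarrow> 'act::finite \<Rightarrow> real" and P :: "'s \<Rightarrow> 'act \<Rightarrow> 's \<Rightarrow> real"
    and beta :: real and rho :: "'s \<Rightarrow> real" and phi :: "'s \<Rightarrow> real^'d::finite" and Phimax :: real
  assumes pol: "\<forall>s a. pol s a \<ge> 0" "\<forall>s. (\<Sum>a\<in>UNIV. pol s a) = 1"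
    and P: "\<forall>s a s'. P s a s' \<ge> 0" "\<forall>s a. (\<Sum>s'\<in>UNIV. P s a s') = 1"
    and beta: "0 < beta" "beta < 1"
    and stat: "stationary_dist (Ppi pol P) rho"
    and phi_bd: "\<forall>s. norm (phi s) \<le> Phimax"
begin

abbreviation "Phi \<equiv> feat_matrix phi"
abbreviation "A_td \<equiv> TD_A pol P beta rho phi"
abbreviation "mu' \<equiv> min_eigenvalue (Bmat rho phi)"

lemma rho_nonneg: "rho s \<ge> 0"
  using stat by (simp add: stationary_dist_def)

lemma rho_sum: "(\<Sum>s\<in>UNIV. rho s) = 1"
  using stat by (simp add: stationary_dist_def)

lemma weighted_norm2_rho_nonneg: "weighted_norm2 rho u \<ge> 0"
  by (intro weighted_norm2_nonneg rho_nonneg)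

lemma weighted_inner_Ppi_le: "\<bar>weighted_inner rho (Ppi pol P *v u) u\<bar> \<le> weighted_norm2 rho u"
proof -
  have "(weighted_inner rho (Ppi pol P *v u) u)\<^sup>2 \<le> weighted_norm2 rho (Ppi pol P *v u) * weighted_norm2 rho u"
    by (intro weighted_inner_Cauchy_Schwarz rho_nonneg)
  also have "\<dots> \<le> (weighted_norm2 rho u)\<^sup>2"
    using stationary_weighted_norm2_le[OF Ppi_stochastic[OF pol P] stat]
    by (simp add: power2_eq_square mult_right_mono weighted_norm2_rho_nonneg)
  finally have "\<bar>weighted_inner rho (Ppi pol P *v u) u\<bar> \<le> \<bar>weighted_norm2 rho u\<bar>"
    by (simp only: abs_le_square_iff)
  then show ?thesis using weighted_norm2_rho_nonneg[of u] by simp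
qed

lemma TD_A_coercive: "(1 - beta) * weighted_norm2 rho (Phi *v v) \<le> v \<bullet> (A_td *v v)"
proof -
  let ?U = "Phi *v v"
  have "v \<bullet> (A_td *v v) = weighted_norm2 rho ?U - beta * weighted_inner rho (Ppi pol P *v ?U) ?U"
    unfolding inner_commute[of v] TD_A_mult inner_transpose_feat_matrix_diagm
    by (simp add: weighted_inner_diff_left weighted_inner_self)
  moreover have "beta * weighted_inner rho (Ppi pol P *v ?U) ?U \<le> beta * weighted_norm2 rho ?U"
    using weighted_inner_Ppi_le[of ?U] beta by (intro mult_left_mono) auto
  ultimately show ?thesis by (simp add: algebra_simps)
qed

lemma weighted_norm2_TD_residual_le:
  "weighted_norm2 rho (u - beta *\<^sub>R (Ppi pol P *v u)) \<le> (1 + beta)\<^sup>2 * weighted_norm2 rho u"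
proof -
  have "beta * (- weighted_inner rho (Ppi pol P *v u) u) \<le> beta * weighted_norm2 rho u"
    using weighted_inner_Ppi_le[of u] beta by (intro mult_left_mono) (auto simp: abs_le_iff)
  moreover have "beta\<^sup>2 * weighted_norm2 rho (Ppi pol P *v u) \<le> beta\<^sup>2 * weighted_norm2 rho u"
    using stationary_weighted_norm2_le[OF Ppi_stochastic[OF pol P] stat] by (simp add: mult_left_mono)
  ultimately show ?thesis
    unfolding weighted_norm2_diff by (simp add: power2_eq_square algebra_simps)
qed

lemma weighted_norm2_feat_le: "weighted_norm2 rho (Phi *v y) \<le> Phimax\<^sup>2 * (norm y)\<^sup>2"
proof -
  have "(phi s \<bullet> y)\<^sup>2 \<le> (Phimax * norm y)\<^sup>2" for s
  proof -
    have "\<bar>phi s \<bullet> y\<bar> \<le> Phimax * norm y"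
      using Cauchy_Schwarz_ineq2[of "phi s" y] phi_bd by (meson mult_right_mono norm_ge_zero order_trans)
    then show ?thesis by (metis abs_ge_zero power2_abs power_mono)
  qed
  then have "weighted_norm2 rho (Phi *v y) \<le> (\<Sum>s\<in>UNIV. rho s * (Phimax * norm y)\<^sup>2)"
    unfolding weighted_norm2_def feat_matrix_mult by (intro sum_mono mult_left_mono rho_nonneg) auto
  then show ?thesis by (simp add: sum_distrib_right[symmetric] rho_sum power_mult_distrib)
qed

text \<open>|A v|^2 is the D-weighted inner product of the residual Phi v - beta P^pi Phi v with Phi (A v).\<close>
lemma TD_A_norm2_le: "(norm (A_td *v v))\<^sup>2 \<le> Phimax\<^sup>2 * ((1 + beta)\<^sup>2 * weighted_norm2 rho (Phi *v v))"
proof -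
  let ?W = "Phi *v v - beta *\<^sub>R (Ppi pol P *v (Phi *v v))"
  define y where "y = A_td *v v"
  define K where "K = Phimax\<^sup>2 * ((1 + beta)\<^sup>2 * weighted_norm2 rho (Phi *v v))"
  have "(weighted_inner rho ?W (Phi *v y))\<^sup>2 \<le> K * (norm y)\<^sup>2"
    using weighted_inner_Cauchy_Schwarz[of rho ?W "Phi *v y", OF rho_nonneg]
      weighted_norm2_TD_residual_le weighted_norm2_feat_le weighted_norm2_rho_nonneg
    unfolding K_def by (smt (verit) mult.commute mult.left_commute mult_mono zero_le_power2)
  moreover have "weighted_inner rho ?W (Phi *v y) = (norm y)\<^sup>2"
    unfolding power2_norm_eq_inner using inner_transpose_feat_matrix_diagm[symmetric]
    by (simp add: y_def TD_A_mult)
  ultimately have sq: "(norm y)\<^sup>2 * (norm y)\<^sup>2 \<le> K * (norm y)\<^sup>2" by (simp add: power2_eq_square)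
  have "(norm y)\<^sup>2 \<le> K"
  proof (cases "y = 0")
    case True
    then show ?thesis unfolding K_def using weighted_norm2_rho_nonneg by simp
  next
    case False
    then show ?thesis using mult_right_le_imp_le[OF sq] by simp
  qed
  then show ?thesis unfolding K_def y_def .
qed

lemma weighted_norm2_feat_ge: "mu' * (norm v)\<^sup>2 \<le> weighted_norm2 rho (Phi *v v)"
  using min_eigenvalue_le_Rayleigh[OF symmetric_Bmat] by (simp add: Bmat_quadratic_form)

lemma mean_step_contraction:
  assumes gamma: "0 < gamma" "gamma \<le> (1 - beta) / ((1 + beta)\<^sup>2 * Phimax\<^sup>2)"
  shows "(norm (v - gamma *\<^sub>R (A_td *v v)))\<^sup>2 \<le> (1 - gamma * (1 - beta) * mu') * (norm v)\<^sup>2"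
proof -
  define K where "K = (1 + beta)\<^sup>2 * Phimax\<^sup>2"
  define Q where "Q = weighted_norm2 rho (Phi *v v)"
  have "K > 0"
    using gamma beta by (cases "Phimax = 0") (auto simp: K_def)
  then have gamma_K: "gamma * K \<le> 1 - beta"
    using gamma by (simp add: K_def pos_le_divide_eq)
  have "(norm (v - gamma *\<^sub>R (A_td *v v)))\<^sup>2
      = (norm v)\<^sup>2 - 2 * gamma * (v \<bullet> (A_td *v v)) + gamma\<^sup>2 * (norm (A_td *v v))\<^sup>2"
    unfolding power2_norm_eq_inner
    by (simp add: inner_diff_left inner_diff_right power2_eq_square algebra_simps inner_commute)
  also have "\<dots> \<le> (norm v)\<^sup>2 - 2 * gamma * ((1 - beta) * Q) + gamma * (gamma * K) * Q"
  proof -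
    have "2 * gamma * ((1 - beta) * Q) \<le> 2 * gamma * (v \<bullet> (A_td *v v))"
      using TD_A_coercive[of v] gamma by (simp add: Q_def)
    moreover have "gamma\<^sup>2 * (norm (A_td *v v))\<^sup>2 \<le> gamma\<^sup>2 * (Phimax\<^sup>2 * ((1 + beta)\<^sup>2 * Q))"
      using TD_A_norm2_le[of v] unfolding Q_def by (intro mult_left_mono) auto
    ultimately show ?thesis by (simp add: K_def power2_eq_square mult_ac)
  qed
  also have "\<dots> \<le> (norm v)\<^sup>2 - gamma * (1 - beta) * Q"
    using mult_left_mono[OF mult_right_mono[OF gamma_K weighted_norm2_rho_nonneg], of gamma] gamma
    by (simp add: Q_def algebra_simps)
  also have "\<dots> \<le> (norm v)\<^sup>2 - gamma * (1 - beta) * (mu' * (norm v)\<^sup>2)"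
    using weighted_norm2_feat_ge[of v] gamma beta by (simp add: Q_def)
  finally show ?thesis by (simp add: algebra_simps)
qed

lemma TD_A_invertible:
  assumes "mu' > 0"
  shows "invertible A_td"
  unfolding invertible_left_inverse matrix_left_invertible_ker
proof (intro allI impI)
  fix x assume "A_td *v x = 0"
  then have "(1 - beta) * weighted_norm2 rho (Phi *v x) \<le> 0" using TD_A_coercive[of x] by simp
  then have "weighted_norm2 rho (Phi *v x) \<le> 0" using beta by (simp add: mult_le_0_iff)
  then have "mu' * (norm x)\<^sup>2 \<le> 0" using weighted_norm2_feat_ge[of x] by linarith
  then show "x = 0" using assms by (simp add: mult_le_0_iff)
qed

lemma TD_A_theta_star:
  assumes "mu' > 0"
  shows "A_td *v theta_star pol P r beta rho phi = TD_b pol r rho phi"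
proof -
  have "A_td ** matrix_inv A_td = mat 1"
    using TD_A_invertible[OF assms] unfolding invertible_def matrix_inv_def by (rule someI2_ex) auto
  then show ?thesis unfolding theta_star_def by (simp add: matrix_vector_mul_assoc)
qed

lemma sample_weight_sum: "(\<Sum>x\<in>UNIV. sample_weight pol P rho x) = 1"
  using P pol rho_sum
  by (simp add: sum_UNIV_triple sample_weight_def sum_distrib_left[symmetric] mult.assoc)

lemma expected_td_update:
  "(\<Sum>x\<in>UNIV. sample_weight pol P rho x *\<^sub>R td_update r beta phi x \<theta>) = TD_b pol r rho phi - A_td *v \<theta>"
proof -
  let ?R = "\<lambda>s. \<Sum>a\<in>UNIV. pol s a * r s a"
  let ?U = "Phi *v \<theta>"
  have row: "(\<Sum>a\<in>UNIV. \<Sum>s'\<in>UNIV. pol s a * P s a s' * (r s a + beta * (\<theta> \<bullet> phi s') - \<theta> \<bullet> phi s))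
     = ?R s - (?U - beta *\<^sub>R (Ppi pol P *v ?U)) $ s" for s
  proof -
    have "(\<Sum>a\<in>UNIV. \<Sum>s'\<in>UNIV. pol s a * P s a s' * (r s a + beta * (\<theta> \<bullet> phi s') - \<theta> \<bullet> phi s))
       = (\<Sum>a\<in>UNIV. pol s a * r s a * (\<Sum>s'\<in>UNIV. P s a s'))
         + beta * (\<Sum>a\<in>UNIV. \<Sum>s'\<in>UNIV. pol s a * P s a s' * (\<theta> \<bullet> phi s'))
         - (\<Sum>a\<in>UNIV. pol s a * (\<Sum>s'\<in>UNIV. P s a s')) * (\<theta> \<bullet> phi s)"
      by (simp add: algebra_simps sum.distrib sum_subtractf sum_distrib_left sum_distrib_right)
    also have "(\<Sum>a\<in>UNIV. \<Sum>s'\<in>UNIV. pol s a * P s a s' * (\<theta> \<bullet> phi s')) = (Ppi pol P *v ?U) $ s"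
      unfolding feat_matrix_mult
      by (subst sum.swap) (simp add: Ppi_def matrix_vector_mult_def sum_distrib_right inner_commute)
    finally show ?thesis using P pol by (simp add: feat_matrix_mult inner_commute)
  qed
  have "(\<Sum>x\<in>UNIV. sample_weight pol P rho x *\<^sub>R td_update r beta phi x \<theta>)
      = (\<Sum>s\<in>UNIV. (rho s * (\<Sum>a\<in>UNIV. \<Sum>s'\<in>UNIV. pol s a * P s a s'
            * (r s a + beta * (\<theta> \<bullet> phi s') - \<theta> \<bullet> phi s))) *\<^sub>R phi s)"
    by (simp add: sum_UNIV_triple sample_weight_def td_update_def scaleR_sum_left[symmetric]
        sum_distrib_left mult_ac)
  also have "\<dots> = (\<Sum>s\<in>UNIV. (rho s * (?R s - (?U - beta *\<^sub>R (Ppi pol P *v ?U)) $ s)) *\<^sub>R phi s)"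
    by (simp only: row)
  also have "\<dots> = TD_b pol r rho phi - A_td *v \<theta>"
    unfolding TD_b_def TD_A_mult transpose_feat_matrix_diagm_mult
    by (simp add: sum_subtractf[symmetric] algebra_simps scaleR_diff_left)
  finally show ?thesis .
qed

lemma expected_td_update_theta_star:
  assumes "mu' > 0"
  shows "(\<Sum>x\<in>UNIV. sample_weight pol P rho x *\<^sub>R td_update r beta phi x \<theta>)
       = - (A_td *v (\<theta> - theta_star pol P r beta rho phi))"
  unfolding expected_td_update TD_A_theta_star[OF assms, symmetric]
  by (simp add: matrix_vector_mult_diff_distrib)

end

section \<open>Integrability and independence of the iterates\<close>

lemma td_iter_Suc:
  "td_iter r beta phi gamma X th0 (Suc t) \<omega> = td_iter r beta phi gamma X th0 t \<omega>
     + gamma *\<^sub>R td_update r beta phi (X (Suc t) \<omega>) (td_iter r beta phi gamma X th0 t \<omega>)"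
  by (simp add: td_update_def Let_def split: prod.split)

lemma continuous_td_update: "continuous_on UNIV (td_update r beta phi x)"
  by (cases x) (simp add: td_update_def continuous_intros)

lemma td_iter_measurable:
  fixes X :: "nat \<Rightarrow> 'w \<Rightarrow> 's::finite \<times> 'act::finite \<times> 's" and phi :: "'s \<Rightarrow> real^'d::finite"
  assumes "th0 \<in> borel_measurable N"
    and "\<And>t. 1 \<le> t \<Longrightarrow> t \<le> n \<Longrightarrow> X t \<in> measurable N (count_space UNIV)"
  shows "td_iter r beta phi gamma X th0 n \<in> borel_measurable N"
  using assms(2)
proof (induction n)
  case 0
  then show ?case using assms(1) by simp
next
  case (Suc n)
  have update: "(\<lambda>p. td_update r beta phi (fst p) (snd p))
      \<in> measurable (count_space UNIV \<Otimes>\<^sub>M borel) (borel :: (real^'d) measure)"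
    by (rule measurable_pair_measure_countable1)
       (simp_all add: borel_measurable_continuous_onI[OF continuous_td_update])
  have X: "X (Suc n) \<in> measurable N (count_space UNIV)" and IH: "td_iter r beta phi gamma X th0 n \<in> borel_measurable N"
    using Suc by simp_all
  have "(\<lambda>\<omega>. td_update r beta phi (fst (X (Suc n) \<omega>, td_iter r beta phi gamma X th0 n \<omega>))
      (snd (X (Suc n) \<omega>, td_iter r beta phi gamma X th0 n \<omega>))) \<in> borel_measurable N"
    by (rule measurable_compose[OF measurable_Pair[OF X IH] update])
  then show ?case unfolding td_iter_Suc using IH by simp
qed

lemma (in finite_measure) integrable_sq_norm_affine_bound:
  fixes u :: "'a \<Rightarrow> 'b::real_normed_vector" and v :: "'a \<Rightarrow> 'c::real_normed_vector"
  assumes u: "integrable M (\<lambda>\<omega>. (norm (u \<omega>))\<^sup>2)" and v: "v \<in> borel_measurable M"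
    and bound: "\<And>\<omega>. \<omega> \<in> space M \<Longrightarrow> norm (v \<omega>) \<le> a * norm (u \<omega>) + c"
  shows "integrable M (\<lambda>\<omega>. (norm (v \<omega>))\<^sup>2)"
proof (rule Bochner_Integration.integrable_bound)
  show "integrable M (\<lambda>\<omega>. 2 * a\<^sup>2 * (norm (u \<omega>))\<^sup>2 + 2 * c\<^sup>2)"
    using u by simp
  show "AE \<omega> in M. norm ((norm (v \<omega>))\<^sup>2) \<le> norm (2 * a\<^sup>2 * (norm (u \<omega>))\<^sup>2 + 2 * c\<^sup>2)"
  proof (rule AE_I2)
    fix \<omega> assume "\<omega> \<in> space M"
    then have "(norm (v \<omega>))\<^sup>2 \<le> (a * norm (u \<omega>) + c)\<^sup>2"
      using bound by (intro power_mono) auto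
    also have "\<dots> \<le> 2 * a\<^sup>2 * (norm (u \<omega>))\<^sup>2 + 2 * c\<^sup>2"
      using zero_le_power2[of "a * norm (u \<omega>) - c"] by (simp add: power2_eq_square algebra_simps)
    finally show "norm ((norm (v \<omega>))\<^sup>2) \<le> norm (2 * a\<^sup>2 * (norm (u \<omega>))\<^sup>2 + 2 * c\<^sup>2)" by simp
  qed
qed (use v in measurable)

lemma integrable_inner_bounded_linear:
  fixes u v :: "'a \<Rightarrow> 'b::euclidean_space"
  assumes L: "bounded_linear L"
    and u: "u \<in> borel_measurable M" "integrable M (\<lambda>\<omega>. (norm (u \<omega>))\<^sup>2)"
    and v: "v \<in> borel_measurable M" "integrable M (\<lambda>\<omega>. (norm (v \<omega>))\<^sup>2)"
  shows "integrable M (\<lambda>\<omega>. u \<omega> \<bullet> L (v \<omega>))"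
proof -
  obtain K where K: "K > 0" "\<And>x. norm (L x) \<le> norm x * K"
    using bounded_linear.pos_bounded[OF L] by blast
  show ?thesis
  proof (rule Bochner_Integration.integrable_bound)
    show "integrable M (\<lambda>\<omega>. K * ((norm (u \<omega>))\<^sup>2 + (norm (v \<omega>))\<^sup>2))"
      using u v by simp
    show "(\<lambda>\<omega>. u \<omega> \<bullet> L (v \<omega>)) \<in> borel_measurable M"
      using borel_measurable_continuous_onI[OF bounded_linear.continuous_on[OF L continuous_on_id]]
        u v by measurable
    show "AE \<omega> in M. norm (u \<omega> \<bullet> L (v \<omega>)) \<le> norm (K * ((norm (u \<omega>))\<^sup>2 + (norm (v \<omega>))\<^sup>2))"
    proof (rule AE_I2)
      fix \<omega>
      have "\<bar>u \<omega> \<bullet> L (v \<omega>)\<bar> \<le> norm (u \<omega>) * (norm (v \<omega>) * K)"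
        using Cauchy_Schwarz_ineq2[of "u \<omega>" "L (v \<omega>)"] K(2)[of "v \<omega>"]
        by (meson mult_left_mono norm_ge_zero order_trans)
      also have "\<dots> \<le> K * ((norm (u \<omega>))\<^sup>2 + (norm (v \<omega>))\<^sup>2)"
      proof -
        have "norm (u \<omega>) * norm (v \<omega>) \<le> (norm (u \<omega>))\<^sup>2 + (norm (v \<omega>))\<^sup>2"
        proof -
          have "2 * (norm (u \<omega>) * norm (v \<omega>)) \<le> (norm (u \<omega>))\<^sup>2 + (norm (v \<omega>))\<^sup>2"
            using zero_le_power2[of "norm (u \<omega>) - norm (v \<omega>)"] by (simp add: power2_eq_square algebra_simps)
          moreover have "0 \<le> norm (u \<omega>) * norm (v \<omega>)" by simp
          ultimately show ?thesis by linarith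
        qed
        then show ?thesis using K(1) by (simp add: mult_left_mono mult_ac)
      qed
      finally show "norm (u \<omega> \<bullet> L (v \<omega>)) \<le> norm (K * ((norm (u \<omega>))\<^sup>2 + (norm (v \<omega>))\<^sup>2))"
        using K(1) by simp
    qed
  qed
qed

locale td_sampling = td_model pol P beta rho phi Phimax + prob_space M
  for pol :: "'s::finite \<Rightarrow> 'act::finite \<Rightarrow> real" and P beta rho
    and phi :: "'s \<Rightarrow> real^'d::finite" and Phimax and M :: "'w measure" +
  fixes r :: "'s \<Rightarrow> 'act \<Rightarrow> real" and Rmax gamma :: real
    and X :: "nat \<Rightarrow> 'w \<Rightarrow> 's \<times> 'act \<times> 's" and th0 :: "'w \<Rightarrow> real^'d"
  assumes r: "\<forall>s a. \<bar>r s a\<bar> \<le> Rmax"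
    and mu_pos: "mu' > 0"
    and X_rv: "\<forall>t\<ge>1. X t \<in> measurable M (count_space UNIV)"
    and th0_rv: "th0 \<in> borel_measurable M"
    and indep: "indep_sets
                  (\<lambda>t. if t = 0 then {th0 -` A \<inter> space M | A. A \<in> sets borel}
                       else {X t -` A \<inter> space M | A. A \<in> sets (count_space UNIV)}) UNIV"
    and X_dist: "\<forall>t\<ge>1. \<forall>s a s'. measure M {\<omega>\<in>space M. X t \<omega> = (s, a, s')} = rho s * pol s a * P s a s'"
    and th0_L2: "integrable M (\<lambda>\<omega>. (norm (th0 \<omega>))\<^sup>2)"
    and gamma: "0 < gamma" "gamma \<le> (1 - beta) / ((1 + beta)\<^sup>2 * Phimax\<^sup>2)"
begin

abbreviation "theta \<equiv> td_iter r beta phi gamma X th0"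
abbreviation "theta_opt \<equiv> theta_star pol P r beta rho phi"

definition mean_step :: "real^'d \<Rightarrow> real^'d" where
  "mean_step v = v - gamma *\<^sub>R (A_td *v v)"

lemma td_update_norm_le:
  "norm (td_update r beta phi x v) \<le> Phimax * Rmax + (1 + beta) * Phimax\<^sup>2 * norm v"
proof -
  obtain s a s' where x: "x = (s, a, s')" by (cases x)
  have feature: "\<bar>v \<bullet> phi t\<bar> \<le> Phimax * norm v" for t
    using Cauchy_Schwarz_ineq2[of v "phi t"] phi_bd
    by (metis mult.commute mult_left_mono norm_ge_zero order_trans)
  have "\<bar>beta * (v \<bullet> phi s')\<bar> \<le> beta * (Phimax * norm v)"
    using feature[of s'] beta by (simp add: abs_mult mult_left_mono)
  then have bound: "\<bar>r s a + beta * (v \<bullet> phi s') - v \<bullet> phi s\<bar> \<le> Rmax + (1 + beta) * Phimax * norm v"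
    using r[rule_format, of s a] feature[of s] by (simp only: abs_le_iff) (simp add: algebra_simps)
  have "norm (td_update r beta phi x v) = \<bar>r s a + beta * (v \<bullet> phi s') - v \<bullet> phi s\<bar> * norm (phi s)"
    by (simp add: x td_update_def)
  also have "\<dots> \<le> (Rmax + (1 + beta) * Phimax * norm v) * Phimax"
    using bound phi_bd by (intro mult_mono) auto
  also have "\<dots> = Phimax * Rmax + (1 + beta) * Phimax\<^sup>2 * norm v"
    by (simp add: power2_eq_square algebra_simps)
  finally show ?thesis .
qed

lemma theta_measurable: "theta t \<in> borel_measurable M"
  using th0_rv X_rv by (intro td_iter_measurable) auto

lemma theta_sq_integrable: "integrable M (\<lambda>\<omega>. (norm (theta t \<omega>))\<^sup>2)"
proof (induction t)
  case 0
  then show ?case using th0_L2 by simp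
next
  case (Suc t)
  have "norm (theta (Suc t) \<omega>) \<le> (1 + gamma * (1 + beta) * Phimax\<^sup>2) * norm (theta t \<omega>) + gamma * Phimax * Rmax"
    for \<omega>
  proof -
    let ?F = "td_update r beta phi (X (Suc t) \<omega>) (theta t \<omega>)"
    have "norm (theta (Suc t) \<omega>) \<le> norm (theta t \<omega>) + gamma * norm ?F"
      unfolding td_iter_Suc using norm_triangle_ineq[of "theta t \<omega>" "gamma *\<^sub>R ?F"] gamma by simp
    moreover have "gamma * norm ?F \<le> gamma * (Phimax * Rmax + (1 + beta) * Phimax\<^sup>2 * norm (theta t \<omega>))"
      using gamma by (intro mult_left_mono td_update_norm_le) auto
    moreover have "norm (theta t \<omega>) + gamma * (Phimax * Rmax + (1 + beta) * Phimax\<^sup>2 * norm (theta t \<omega>))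
        = (1 + gamma * (1 + beta) * Phimax\<^sup>2) * norm (theta t \<omega>) + gamma * Phimax * Rmax"
      by (simp add: algebra_simps)
    ultimately show ?thesis by linarith
  qed
  then show ?case by (intro integrable_sq_norm_affine_bound[OF Suc theta_measurable])
qed

lemma theta_err_sq_integrable: "integrable M (\<lambda>\<omega>. (norm (theta t \<omega> - theta_opt))\<^sup>2)"
proof (rule integrable_sq_norm_affine_bound[OF theta_sq_integrable])
  show "(\<lambda>\<omega>. theta t \<omega> - theta_opt) \<in> borel_measurable M" using theta_measurable by simp
  show "norm (theta t \<omega> - theta_opt) \<le> 1 * norm (theta t \<omega>) + norm theta_opt" for \<omega>
    using norm_triangle_ineq4 by simp
qed

definition sample_events :: "nat \<Rightarrow> 'w set set" where
  "sample_events t = (if t = 0 then {th0 -` A \<inter> space M | A. A \<in> sets borel}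
     else {X t -` A \<inter> space M | A. A \<in> sets (count_space UNIV)})"

definition history :: "nat \<Rightarrow> 'w measure" where
  "history j = sigma (space M) (\<Union>t\<in>{..<j}. sample_events t)"

lemma indep_sample_events: "indep_sets sample_events UNIV"
  using indep unfolding sample_events_def[abs_def] .

lemma Int_stable_sample_events: "Int_stable (sample_events t)"
proof (cases "t = 0")
  case True
  show ?thesis unfolding Int_stable_def sample_events_def using True
  proof clarsimp
    fix A B :: "(real^'d) set" assume "A \<in> sets borel" "B \<in> sets borel"
    then show "\<exists>C. th0 -` A \<inter> space M \<inter> (th0 -` B \<inter> space M) = th0 -` C \<inter> space M \<and> C \<in> sets borel"
      by (intro exI[of _ "A \<inter> B"]) auto
  qed
next
  case False
  show ?thesis unfolding Int_stable_def sample_events_def using False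
  proof clarsimp
    fix A B :: "('s \<times> 'act \<times> 's) set"
    show "\<exists>C. X t -` A \<inter> space M \<inter> (X t -` B \<inter> space M) = X t -` C \<inter> space M"
      by (intro exI[of _ "A \<inter> B"]) auto
  qed
qed

lemma sets_history: "sets (history j) = sigma_sets (space M) (\<Union>t\<in>{..<j}. sample_events t)"
  unfolding history_def by (rule sets_measure_of) (auto simp: sample_events_def)

lemma space_history: "space (history j) = space M"
  unfolding history_def by (rule space_measure_of) (auto simp: sample_events_def)

lemma theta_measurable_history:
  assumes "n < j"
  shows "theta n \<in> borel_measurable (history j)"
proof (rule td_iter_measurable)
  show "th0 \<in> borel_measurable (history j)"
  proof (rule measurableI)
    fix A :: "(real^'d) set" assume "A \<in> sets borel"
    then have "th0 -` A \<inter> space M \<in> (\<Union>t\<in>{..<j}. sample_events t)"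
      using assms by (auto simp: sample_events_def)
    then show "th0 -` A \<inter> space (history j) \<in> sets (history j)"
      unfolding sets_history space_history using assms by auto
  qed simp
  fix t assume t: "1 \<le> t" "t \<le> n"
  show "X t \<in> measurable (history j) (count_space UNIV)"
  proof (rule measurableI)
    fix A :: "('s \<times> 'act \<times> 's) set"
    have "X t -` A \<inter> space M \<in> sample_events t" using t by (auto simp: sample_events_def)
    then have "X t -` A \<inter> space M \<in> (\<Union>t\<in>{..<j}. sample_events t)" using assms t by auto
    then show "X t -` A \<inter> space (history j) \<in> sets (history j)"
      unfolding sets_history space_history using assms t by auto
  qed simp
qed

lemma indep_history_sample:
  assumes "1 \<le> j"
  shows "indep_set (sets (history j)) (sigma_sets (space M) (sample_events j))"
proof -
  let ?I = "\<lambda>b::bool. if b then {..<j} else {j}"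
  have "indep_sets sample_events (\<Union>b. ?I b)"
    by (rule indep_sets_mono_index[OF _ indep_sample_events]) simp
  then have "indep_sets (\<lambda>b. sigma_sets (space M) (\<Union>i\<in>?I b. sample_events i)) UNIV"
    by (rule indep_sets_collect_sigma) (auto simp: Int_stable_sample_events disjoint_family_on_def)
  moreover have "(\<lambda>b. sigma_sets (space M) (\<Union>i\<in>?I b. sample_events i))
      = case_bool (sets (history j)) (sigma_sets (space M) (sample_events j))"
    by (rule ext) (simp add: sets_history split: bool.split)
  ultimately show ?thesis unfolding indep_set_def by simp
qed

lemma indep_var_indicator_history:
  assumes j: "1 \<le> j" and Y: "Y \<in> borel_measurable (history j)" "Y \<in> borel_measurable M"
  shows "indep_var borel (\<lambda>\<omega>. indicator {x} (X j \<omega>) :: real) borel Y"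
proof -
  define I where "I \<omega> = (indicator {x} (X j \<omega>) :: real)" for \<omega>
  have I_measurable: "I \<in> borel_measurable M"
    unfolding I_def by (rule measurable_compose[of _ _ "count_space UNIV"]) (use X_rv j in simp_all)
  let ?S_I = "sigma_sets (space M) {I -` A \<inter> space M | A. A \<in> sets (borel :: real measure)}"
  let ?S_Y = "sigma_sets (space M) {Y -` A \<inter> space M | A. A \<in> sets (borel :: real measure)}"
  have S_I: "?S_I \<subseteq> sigma_sets (space M) (sample_events j)"
  proof (rule sigma_sets_mono, clarify)
    fix A :: "real set"
    have "I -` A \<inter> space M = X j -` (indicator {x} -` A) \<inter> space M" unfolding I_def by auto
    also have "\<dots> \<in> sample_events j" using j by (auto simp: sample_events_def)
    finally show "I -` A \<inter> space M \<in> sigma_sets (space M) (sample_events j)" ..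
  qed
  have S_Y: "?S_Y \<subseteq> sets (history j)"
    unfolding sets_history
  proof (rule sigma_sets_mono, clarify)
    fix A :: "real set" assume "A \<in> sets borel"
    then have "Y -` A \<inter> space (history j) \<in> sets (history j)" using Y(1) by (rule measurable_sets[rotated])
    then show "Y -` A \<inter> space M \<in> sigma_sets (space M) (\<Union>t\<in>{..<j}. sample_events t)"
      by (simp add: space_history sets_history)
  qed
  have "indep_set ?S_I ?S_Y"
    unfolding indep_sets2_eq
  proof (intro conjI ballI)
    note past = indep_history_sample[OF j, unfolded indep_sets2_eq]
    show "?S_I \<subseteq> events" "?S_Y \<subseteq> events" using S_I S_Y past by blast+
    fix a b assume "a \<in> ?S_I" "b \<in> ?S_Y"
    then have "prob (b \<inter> a) = prob b * prob a" using S_I S_Y past by blast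
    then show "prob (a \<inter> b) = prob a * prob b" by (simp add: Int_commute mult.commute)
  qed
  then show ?thesis
    using I_measurable Y(2) unfolding indep_var_eq I_def by simp
qed

lemma integral_indicator_sample:
  assumes j: "1 \<le> j" and Y: "Y \<in> borel_measurable (history j)" "Y \<in> borel_measurable M" "integrable M Y"
  shows "(\<integral>\<omega>. indicator {x} (X j \<omega>) * Y \<omega> \<partial>M) = prob {\<omega>\<in>space M. X j \<omega> = x} * (\<integral>\<omega>. Y \<omega> \<partial>M)"
proof -
  have "integrable M (\<lambda>\<omega>. indicator {x} (X j \<omega>) :: real)"
    using X_rv j
    by (intro finite_measure.integrable_const_bound[OF finite_measure_axioms, where B=1])
       (auto intro: measurable_compose[of _ _ "count_space UNIV"])
  with indep_var_indicator_history[OF j Y(1,2)]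
  have "(\<integral>\<omega>. indicator {x} (X j \<omega>) * Y \<omega> \<partial>M) = (\<integral>\<omega>. indicator {x} (X j \<omega>) \<partial>M) * (\<integral>\<omega>. Y \<omega> \<partial>M)"
    using Y(3) by (intro indep_var_lebesgue_integral)
  also have "(\<integral>\<omega>. indicator {x} (X j \<omega>) \<partial>M) = (\<integral>\<omega>. indicator {\<omega>\<in>space M. X j \<omega> = x} \<omega> \<partial>M)"
    by (rule Bochner_Integration.integral_cong) (auto simp: indicator_def)
  also have "\<dots> = prob {\<omega>\<in>space M. X j \<omega> = x}" by (simp add: Int_absorb2 subset_iff)
  finally show ?thesis .
qed

lemma prob_sample: "1 \<le> j \<Longrightarrow> prob {\<omega>\<in>space M. X j \<omega> = x} = sample_weight pol P rho x"
  using X_dist by (cases x) (auto simp: sample_weight_def)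

text \<open>X j is independent of the history j, so it can be averaged out against its distribution.\<close>
lemma integral_fresh_sample:
  assumes j: "1 \<le> j"
    and Y: "\<And>x. Y x \<in> borel_measurable (history j)" "\<And>x. Y x \<in> borel_measurable M"
      "\<And>x. integrable M (Y x)"
  shows "(\<integral>\<omega>. Y (X j \<omega>) \<omega> \<partial>M) = (\<integral>\<omega>. (\<Sum>x\<in>UNIV. sample_weight pol P rho x * Y x \<omega>) \<partial>M)"
proof -
  have Xj: "X j \<in> measurable M (count_space UNIV)" using X_rv j by simp
  have split_sample: "Y (X j \<omega>) \<omega> = (\<Sum>x\<in>UNIV. indicator {x} (X j \<omega>) * Y x \<omega>)" for \<omega>
  proof -
    have "(\<Sum>x\<in>UNIV. indicator {x} (X j \<omega>) * Y x \<omega>) = (\<Sum>x\<in>UNIV. if X j \<omega> = x then Y x \<omega> else 0)"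
      by (rule sum.cong) (auto simp: indicator_def)
    then show ?thesis by simp
  qed
  have "integrable M (\<lambda>\<omega>. indicator {x} (X j \<omega>) * Y x \<omega>)" for x
  proof (rule Bochner_Integration.integrable_bound[OF Y(3)[of x]])
    show "(\<lambda>\<omega>. indicator {x} (X j \<omega>) * Y x \<omega>) \<in> borel_measurable M"
      using Y(2) measurable_compose[OF Xj, of "indicator {x}" borel] by measurable
  qed (simp add: indicator_def)
  then have "(\<integral>\<omega>. Y (X j \<omega>) \<omega> \<partial>M) = (\<Sum>x\<in>UNIV. (\<integral>\<omega>. indicator {x} (X j \<omega>) * Y x \<omega> \<partial>M))"
    unfolding split_sample by (rule Bochner_Integration.integral_sum)
  also have "\<dots> = (\<Sum>x\<in>UNIV. sample_weight pol P rho x * (\<integral>\<omega>. Y x \<omega> \<partial>M))"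
    using j Y by (simp add: integral_indicator_sample prob_sample)
  also have "\<dots> = (\<integral>\<omega>. (\<Sum>x\<in>UNIV. sample_weight pol P rho x * Y x \<omega>) \<partial>M)"
    using Y(3) by (simp add: Bochner_Integration.integral_sum)
  finally show ?thesis .
qed

lemma expected_sampled_error:
  "(\<Sum>x\<in>UNIV. sample_weight pol P rho x *\<^sub>R (v - theta_opt + gamma *\<^sub>R td_update r beta phi x v))
     = mean_step (v - theta_opt)"
proof -
  have "(\<Sum>x\<in>UNIV. sample_weight pol P rho x *\<^sub>R (v - theta_opt + gamma *\<^sub>R td_update r beta phi x v))
      = (\<Sum>x\<in>UNIV. sample_weight pol P rho x) *\<^sub>R (v - theta_opt)
        + gamma *\<^sub>R (\<Sum>x\<in>UNIV. sample_weight pol P rho x *\<^sub>R td_update r beta phi x v)"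
    by (simp add: scaleR_add_right sum.distrib scaleR_sum_left scaleR_sum_right mult.commute)
  also have "\<dots> = mean_step (v - theta_opt)"
    unfolding sample_weight_sum expected_td_update_theta_star[OF mu_pos] mean_step_def by simp
  finally show ?thesis .
qed

lemma sampled_error_measurable:
  "(\<lambda>\<omega>. theta n \<omega> - theta_opt + gamma *\<^sub>R td_update r beta phi x (theta n \<omega>)) \<in> borel_measurable M"
  using theta_measurable borel_measurable_continuous_onI[OF continuous_td_update, THEN measurable_compose[rotated]]
  by measurable

lemma sampled_error_sq_integrable:
  "integrable M (\<lambda>\<omega>. (norm (theta n \<omega> - theta_opt + gamma *\<^sub>R td_update r beta phi x (theta n \<omega>)))\<^sup>2)"
proof (rule integrable_sq_norm_affine_bound[OF theta_sq_integrable sampled_error_measurable])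
  fix \<omega>
  let ?F = "td_update r beta phi x (theta n \<omega>)"
  have "norm (theta n \<omega> - theta_opt + gamma *\<^sub>R ?F) \<le> norm (theta n \<omega>) + norm theta_opt + gamma * norm ?F"
    using gamma norm_triangle_ineq4[of "theta n \<omega>" theta_opt]
      norm_triangle_ineq[of "theta n \<omega> - theta_opt" "gamma *\<^sub>R ?F"]
    by simp
  also have "\<dots> \<le> norm (theta n \<omega>) + norm theta_opt
      + gamma * (Phimax * Rmax + (1 + beta) * Phimax\<^sup>2 * norm (theta n \<omega>))"
    using gamma by (simp add: mult_left_mono td_update_norm_le)
  also have "\<dots> = (1 + gamma * (1 + beta) * Phimax\<^sup>2) * norm (theta n \<omega>)
      + (norm theta_opt + gamma * Phimax * Rmax)"
    by (simp add: algebra_simps)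
  finally show "norm (theta n \<omega> - theta_opt + gamma *\<^sub>R ?F) \<le> \<dots>" .
qed

lemma integral_next_iterate:
  assumes "i \<le> n" and L: "bounded_linear L"
  shows "(\<integral>\<omega>. (theta i \<omega> - theta_opt) \<bullet> L (theta (Suc n) \<omega> - theta_opt) \<partial>M)
       = (\<integral>\<omega>. (theta i \<omega> - theta_opt) \<bullet> L (mean_step (theta n \<omega> - theta_opt)) \<partial>M)"
proof -
  define w where "w x \<omega> = theta n \<omega> - theta_opt + gamma *\<^sub>R td_update r beta phi x (theta n \<omega>)" for x \<omega>
  define Y where "Y x \<omega> = (theta i \<omega> - theta_opt) \<bullet> L (w x \<omega>)" for x \<omega>
  have Y_measurable: "Y x \<in> borel_measurable N"
    if "theta i \<in> borel_measurable N" "theta n \<in> borel_measurable N" for x and N :: "'w measure"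
    unfolding Y_def w_def
    by (rule borel_measurable_continuous_Pair[OF that])
       (intro continuous_intros bounded_linear.continuous_on[OF L]
         continuous_on_compose2[OF continuous_td_update] subset_UNIV)
  have Y_integrable: "integrable M (Y x)" for x
  proof -
    have "(\<lambda>\<omega>. theta i \<omega> - theta_opt) \<in> borel_measurable M" using theta_measurable by simp
    from integrable_inner_bounded_linear[OF L this theta_err_sq_integrable
        sampled_error_measurable sampled_error_sq_integrable]
    show ?thesis unfolding Y_def w_def .
  qed
  have "(\<integral>\<omega>. (theta i \<omega> - theta_opt) \<bullet> L (theta (Suc n) \<omega> - theta_opt) \<partial>M)
      = (\<integral>\<omega>. Y (X (Suc n) \<omega>) \<omega> \<partial>M)"
    unfolding td_iter_Suc by (simp add: Y_def w_def diff_add_eq)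
  also have "\<dots> = (\<integral>\<omega>. (\<Sum>x\<in>UNIV. sample_weight pol P rho x * Y x \<omega>) \<partial>M)"
  proof (rule integral_fresh_sample)
    show "Y x \<in> borel_measurable (history (Suc n))" for x
      using assms(1) by (intro Y_measurable theta_measurable_history) auto
    show "Y x \<in> borel_measurable M" for x by (intro Y_measurable theta_measurable)
  qed (simp_all add: Y_integrable)
  also have "\<dots> = (\<integral>\<omega>. (theta i \<omega> - theta_opt) \<bullet> L (mean_step (theta n \<omega> - theta_opt)) \<partial>M)"
    unfolding Y_def w_def expected_sampled_error[symmetric] inner_sum_right
      linear_sum[OF bounded_linear.linear[OF L]] linear_scale[OF bounded_linear.linear[OF L]]
    by (simp add: mult_ac)
  finally show ?thesis .
qed

section \<open>Geometric decay of the correlations\<close>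

lemma bounded_linear_mean_step_power: "bounded_linear (mean_step ^^ l)"
proof (induction l)
  case 0
  then show ?case by (simp add: id_def bounded_linear_ident)
next
  case (Suc l)
  have "bounded_linear mean_step"
    unfolding mean_step_def[abs_def]
    by (intro bounded_linear_sub bounded_linear_ident
        bounded_linear_scaleR_right[THEN bounded_linear_compose] matrix_vector_mul_bounded_linear)
  then show ?case using bounded_linear_compose[OF _ Suc] by (simp add: o_def)
qed

lemma integral_iterate:
  assumes "bounded_linear L"
  shows "(\<integral>\<omega>. (theta i \<omega> - theta_opt) \<bullet> L (theta (i + l) \<omega> - theta_opt) \<partial>M)
       = (\<integral>\<omega>. (theta i \<omega> - theta_opt) \<bullet> L ((mean_step ^^ l) (theta i \<omega> - theta_opt)) \<partial>M)"
  using assms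
proof (induction l arbitrary: L)
  case 0
  then show ?case by simp
next
  case (Suc l)
  have "bounded_linear (\<lambda>v. L (mean_step v))"
    using bounded_linear_compose[OF Suc.prems bounded_linear_mean_step_power[of 1]] by (simp add: o_def)
  then show ?case
    using integral_next_iterate[of i "i + l" L] Suc by simp
qed

lemma contraction_rate_nonneg: "0 \<le> 1 - gamma * (1 - beta) * mu'"
proof -
  obtain e :: "real^'d" where "norm e = 1" using norm_axis_1 by blast
  then have "(norm (mean_step e))\<^sup>2 \<le> 1 - gamma * (1 - beta) * mu'"
    using mean_step_contraction[OF gamma, of e] by (simp add: mean_step_def)
  then show ?thesis using zero_le_power2[of "norm (mean_step e)"] by linarith
qed

definition kappa :: real where
  "kappa = sqrt (1 - gamma * (1 - beta) * mu')"

lemma kappa_nonneg: "0 \<le> kappa"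
  using contraction_rate_nonneg by (simp add: kappa_def)

lemma kappa_less_one: "kappa < 1"
proof -
  have "0 < gamma * (1 - beta) * mu'" using gamma beta mu_pos by simp
  then show ?thesis unfolding kappa_def by simp
qed

lemma mean_step_power_norm_le: "norm ((mean_step ^^ l) v) \<le> kappa ^ l * norm v"
proof (induction l)
  case 0
  then show ?case by simp
next
  case (Suc l)
  have step: "norm (mean_step u) \<le> kappa * norm u" for u
  proof (rule power2_le_imp_le)
    show "(norm (mean_step u))\<^sup>2 \<le> (kappa * norm u)\<^sup>2"
      using mean_step_contraction[OF gamma, of u] contraction_rate_nonneg
      by (simp add: mean_step_def kappa_def power_mult_distrib)
  qed (simp add: kappa_nonneg)
  have "norm ((mean_step ^^ Suc l) v) \<le> kappa * norm ((mean_step ^^ l) v)" using step by simp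
  also have "\<dots> \<le> kappa * (kappa ^ l * norm v)" using Suc kappa_nonneg by (rule mult_left_mono)
  finally show ?case by simp
qed

lemma cross_moment_le:
  assumes "i \<le> j"
  shows "(\<integral>\<omega>. (theta i \<omega> - theta_opt) \<bullet> (theta j \<omega> - theta_opt) \<partial>M)
           \<le> kappa ^ (j - i) * (\<integral>\<omega>. (norm (theta i \<omega> - theta_opt))\<^sup>2 \<partial>M)"
proof -
  let ?z = "\<lambda>\<omega>. theta i \<omega> - theta_opt"
  have z_measurable: "?z \<in> borel_measurable M" using theta_measurable by simp
  have "(\<integral>\<omega>. ?z \<omega> \<bullet> (theta j \<omega> - theta_opt) \<partial>M) = (\<integral>\<omega>. ?z \<omega> \<bullet> id (theta (i + (j - i)) \<omega> - theta_opt) \<partial>M)"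
    using assms by simp
  also have "\<dots> = (\<integral>\<omega>. ?z \<omega> \<bullet> (mean_step ^^ (j - i)) (?z \<omega>) \<partial>M)"
    using integral_iterate[OF bounded_linear_ident[folded id_def]] by simp
  also have "\<dots> \<le> (\<integral>\<omega>. kappa ^ (j - i) * (norm (?z \<omega>))\<^sup>2 \<partial>M)"
  proof (rule integral_mono)
    show "integrable M (\<lambda>\<omega>. ?z \<omega> \<bullet> (mean_step ^^ (j - i)) (?z \<omega>))"
      by (rule integrable_inner_bounded_linear[OF bounded_linear_mean_step_power z_measurable
            theta_err_sq_integrable z_measurable theta_err_sq_integrable])
    show "integrable M (\<lambda>\<omega>. kappa ^ (j - i) * (norm (?z \<omega>))\<^sup>2)"
      using theta_err_sq_integrable by simp
    fix \<omega>
    have "?z \<omega> \<bullet> (mean_step ^^ (j - i)) (?z \<omega>) \<le> norm (?z \<omega>) * norm ((mean_step ^^ (j - i)) (?z \<omega>))"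
      by (rule norm_cauchy_schwarz)
    also have "\<dots> \<le> norm (?z \<omega>) * (kappa ^ (j - i) * norm (?z \<omega>))"
      by (intro mult_left_mono mean_step_power_norm_le) simp
    finally show "?z \<omega> \<bullet> (mean_step ^^ (j - i)) (?z \<omega>) \<le> kappa ^ (j - i) * (norm (?z \<omega>))\<^sup>2"
      by (simp add: power2_eq_square mult_ac)
  qed
  also have "\<dots> = kappa ^ (j - i) * (\<integral>\<omega>. (norm (?z \<omega>))\<^sup>2 \<partial>M)" by simp
  finally show ?thesis .
qed

lemma geometric_factor_le: "1 / (1 - kappa) \<le> 2 / (gamma * (1 - beta) * mu')"
proof -
  define c where "c = gamma * (1 - beta) * mu'"
  have "c > 0" unfolding c_def using gamma beta mu_pos by simp
  have "c = 1 - kappa\<^sup>2" using contraction_rate_nonneg by (simp add: kappa_def c_def)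
  also have "\<dots> \<le> 2 * (1 - kappa)"
    using zero_le_power2[of "1 - kappa"] by (simp add: power2_eq_square algebra_simps)
  finally show ?thesis
    unfolding c_def[symmetric] using \<open>c > 0\<close> kappa_less_one by (simp add: field_simps)
qed

end

lemma sum_cross_geometric_le:
  fixes c :: "nat \<Rightarrow> nat \<Rightarrow> real" and E :: "nat \<Rightarrow> real"
  assumes q: "0 \<le> q" "q < 1" and E: "\<And>i. E i \<ge> 0"
    and c: "\<And>i j. i < j \<Longrightarrow> c i j \<le> q ^ (j - i) * E i"
  shows "(\<Sum>i\<in>{k+1..k+N-1}. \<Sum>j\<in>{i+1..k+N}. c i j) \<le> 1 / (1 - q) * (\<Sum>i\<in>{k+1..k+N}. E i)"
proof -
  have row: "(\<Sum>j\<in>{i+1..m}. c i j) \<le> 1 / (1 - q) * E i" for i m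
  proof -
    have "(\<Sum>j\<in>{i+1..m}. c i j) \<le> (\<Sum>j\<in>{i+1..m}. q ^ (j - i) * E i)"
      by (intro sum_mono c) auto
    also have "\<dots> = (\<Sum>j\<in>{i+1..m}. q ^ (j - i)) * E i" by (simp add: sum_distrib_right)
    also have "(\<Sum>j\<in>{i+1..m}. q ^ (j - i)) \<le> (\<Sum>l<m - i + 1. q ^ l)"
    proof -
      have "(\<Sum>j\<in>{i+1..m}. q ^ (j - i)) = (\<Sum>l\<in>{1..m-i}. q ^ l)"
        by (rule sum.reindex_bij_witness[where i="\<lambda>l. l + i" and j="\<lambda>j. j - i"]) auto
      also have "\<dots> \<le> (\<Sum>l<m - i + 1. q ^ l)" using q by (intro sum_mono2) auto
      finally show ?thesis .
    qed
    also have "\<dots> = (1 - q ^ (m - i + 1)) / (1 - q)" using q by (subst sum_gp_strict) auto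
    also have "\<dots> \<le> 1 / (1 - q)" using q by (intro divide_right_mono) auto
    finally show ?thesis using E[of i] by (simp add: mult_right_mono)
  qed
  have "(\<Sum>i\<in>{k+1..k+N-1}. \<Sum>j\<in>{i+1..k+N}. c i j) \<le> (\<Sum>i\<in>{k+1..k+N-1}. 1 / (1 - q) * E i)"
    by (intro sum_mono row)
  also have "\<dots> \<le> (\<Sum>i\<in>{k+1..k+N}. 1 / (1 - q) * E i)"
    using q E by (intro sum_mono2) auto
  finally show ?thesis by (simp add: sum_distrib_left)
qed

theorem mainTheorem12:
  fixes M :: "'w measure"
    and pol :: "'s::finite \<Rightarrow> 'act::finite \<Rightarrow> real"
    and P :: "'s \<Rightarrow> 'act \<Rightarrow> 's \<Rightarrow> real"
    and r :: "'s \<Rightarrow> 'act \<Rightarrow> real"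
    and Rmax beta Phimax gamma :: real
    and rho :: "'s \<Rightarrow> real"
    and phi :: "'s \<Rightarrow> real^'d::finite"
    and X :: "nat \<Rightarrow> 'w \<Rightarrow> 's \<times> 'act \<times> 's"
    and th0 :: "'w \<Rightarrow> real^'d"
    and k N :: nat
  assumes M: "prob_space M"
    and pol: "\<forall>s a. pol s a \<ge> 0" "\<forall>s. (\<Sum>a\<in>UNIV. pol s a) = 1"
    and P: "\<forall>s a s'. P s a s' \<ge> 0" "\<forall>s a. (\<Sum>s'\<in>UNIV. P s a s') = 1"
    and r: "\<forall>s a. \<bar>r s a\<bar> \<le> Rmax"
    and beta: "0 < beta" "beta < 1"
    and irred: "irreducible_chain (Ppi pol P)"
    and stat: "stationary_dist (Ppi pol P) rho"
    and phi_bd: "\<forall>s. norm (phi s) \<le> Phimax"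
    and rank: "rank (feat_matrix phi) = CARD('d)"
    and mu_pos: "min_eigenvalue (Bmat rho phi) > 0"
    and X_rv: "\<forall>t\<ge>1. X t \<in> measurable M (count_space UNIV)"
    and th0_rv: "th0 \<in> borel_measurable M"
    and indep: "prob_space.indep_sets M
                  (\<lambda>t. if t = 0 then {th0 -` A \<inter> space M | A. A \<in> sets borel}
                       else {X t -` A \<inter> space M | A. A \<in> sets (count_space UNIV)}) UNIV"
    and X_dist: "\<forall>t\<ge>1. \<forall>s a s'. measure M {\<omega>\<in>space M. X t \<omega> = (s, a, s')} = rho s * pol s a * P s a s'"
    and th0_L2: "integrable M (\<lambda>\<omega>. (norm (th0 \<omega>))\<^sup>2)"
    and gamma: "0 < gamma" "gamma \<le> (1 - beta) / ((1 + beta)\<^sup>2 * Phimax\<^sup>2)"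
    and N: "N \<ge> 1"
  shows "(\<Sum>i\<in>{k+1..k+N-1}. \<Sum>j\<in>{i+1..k+N}.
            integral\<^sup>L M (\<lambda>\<omega>. (td_iter r beta phi gamma X th0 i \<omega> - theta_star pol P r beta rho phi)
                             \<bullet> (td_iter r beta phi gamma X th0 j \<omega> - theta_star pol P r beta rho phi)))
         \<le> 2 / (gamma * (1 - beta) * min_eigenvalue (Bmat rho phi)) *
           (\<Sum>i\<in>{k+1..k+N}.
              integral\<^sup>L M (\<lambda>\<omega>. (norm (td_iter r beta phi gamma X th0 i \<omega> - theta_star pol P r beta rho phi))\<^sup>2))"
proof -
  interpret td_sampling pol P beta rho phi Phimax M r Rmax gamma X th0
    by (intro td_sampling.intro td_model.intro td_sampling_axioms.intro)
       (fact M pol P r beta stat phi_bd mu_pos X_rv th0_rv indep X_dist th0_L2 gamma)+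
  let ?E = "\<lambda>i. \<integral>\<omega>. (norm (theta i \<omega> - theta_opt))\<^sup>2 \<partial>M"
  have "(\<Sum>i\<in>{k+1..k+N-1}. \<Sum>j\<in>{i+1..k+N}. \<integral>\<omega>. (theta i \<omega> - theta_opt) \<bullet> (theta j \<omega> - theta_opt) \<partial>M)
      \<le> 1 / (1 - kappa) * (\<Sum>i\<in>{k+1..k+N}. ?E i)"
    by (rule sum_cross_geometric_le[OF kappa_nonneg kappa_less_one])
       (simp_all add: cross_moment_le integral_nonneg_AE)
  also have "\<dots> \<le> 2 / (gamma * (1 - beta) * mu') * (\<Sum>i\<in>{k+1..k+N}. ?E i)"
    using geometric_factor_le by (intro mult_right_mono sum_nonneg integral_nonneg_AE) auto
  finally show ?thesis .
qed

end
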